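(* In the setting described in the context, the empirical cost functions $f_t(\mathbf{L})$ are uniformly bounded and Lipschitz in $\mathbf{L}$.
   Context: Fix integers $p,r\ge 1$ and constants $\lambda_1,\lambda_2>0$. Let $\mathcal{G}$ be a finite collection of subsets of $\{1,\dots,p\}$. For $\mathbf{s}\in\mathbb{R}^p$ and $g\in\mathcal{G}$, let $\mathbf{s}_{|g}$ be the vector equal to $\mathbf{s}$ on indices in $g$ and zero elsewhere, and $\|\mathbf{s}\|_{\ell_1/\ell_\infty}=\sum_{g\in\mathcal{G}}\|\mathbf{s}_{|g}\|_\infty$. Define $\hat\ell(\mathbf{d},\mathbf{L},\mathbf{r},\mathbf{s})=\tfrac12\|\mathbf{d}-\mathbf{L}\mathbf{r}-\mathbf{s}\|_2^2+\tfrac{\lambda_1}{2}\|\mathbf{r}\|_2^2+\lambda_2\|\mathbf{s}\|_{\ell_1/\ell_\infty}$ and $\ell(\mathbf{d},\mathbf{L})=\min_{\mathbf{r},\mathbf{s}}\hat\ell(\mathbf{d},\mathbf{L},\mathbf{r},\mathbf{s})$. Data $\mathbf{d}_1,\mathbf{d}_2,\dots\in\mathbb{R}^p$ are independent and uniformly bounded (there is $M$ with $\|\mathbf{d}_t\|_2\le M$ for all $t$). The empirical cost function is $f_t(\mathbf{L})=\frac1t\sum_{i=1}^t\ell(\mathbf{d}_i,\mathbf{L})+\frac{\lambda_1}{2t}\|\mathbf{L}\|_F^2$, considered for $\mathbf{L}$ in a compact set $\mathcal{L}\subset\mathbb{R}^{p\times r}$ (the set containing the iterates of the online algorithm $\mathbf{L}_t=\mathbf{B}_t(\mathbf{A}_t+\lambda_1\mathbf{I})^{-1}$,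 $\mathbf{A}_t=\sum_{i\le t}\mathbf{r}_i\mathbf{r}_i^T$, $\mathbf{B}_t=\sum_{i\le t}(\mathbf{d}_i-\mathbf{s}_i)\mathbf{r}_i^T$, with $(\mathbf{r}_i,\mathbf{s}_i)$ a minimizer of $\hat\ell(\mathbf{d}_i,\mathbf{L}_{i-1},\cdot,\cdot)$). "Uniformly" means with constants independent of $t$. *)

theory Defs
  imports "HOL-Analysis.Analysis"
begin

text \<open>Vectors in R^p are \<open>real^'p\<close>, matrices in R^{p x r} are \<open>real^'r^'p\<close>
  (p rows, r columns); the Euclidean norm on \<open>real^'r^'p\<close> is the Frobenius norm.\<close>

definition restrict_grp :: "real^'p \<Rightarrow> 'p set \<Rightarrow> real^'p" where
  "restrict_grp s g = (\<chi> i. if i \<in> g then s $ i else 0)"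

definition linf_norm :: "real^'p \<Rightarrow> real" where
  "linf_norm v = Max (range (\<lambda>i. \<bar>v $ i\<bar>))"

definition l1linf_norm :: "'p set set \<Rightarrow> real^'p \<Rightarrow> real" where
  "l1linf_norm G s = (\<Sum>g\<in>G. linf_norm (restrict_grp s g))"

definition hat_loss ::
  "'p set set \<Rightarrow> real \<Rightarrow> real \<Rightarrow> real^'p \<Rightarrow> real^'r^'p \<Rightarrow> real^'r \<Rightarrow> real^'p \<Rightarrow> real" where
  "hat_loss G lam1 lam2 d L r s =
     (1/2) * (norm (d - L *v r - s))\<^sup>2 + (lam1/2) * (norm r)\<^sup>2 + lam2 * l1linf_norm G s"

definition loss ::
  "'p set set \<Rightarrow> real \<Rightarrow> real \<Rightarrow> real^'p \<Rightarrow> real^'r^'p \<Rightarrow> real" where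
  "loss G lam1 lam2 d L = (INF rs \<in> UNIV. hat_loss G lam1 lam2 d L (fst rs) (snd rs))"

definition emp_cost ::
  "'p set set \<Rightarrow> real \<Rightarrow> real \<Rightarrow> (nat \<Rightarrow> real^'p) \<Rightarrow> nat \<Rightarrow> real^'r^'p \<Rightarrow> real" where
  "emp_cost G lam1 lam2 d t L =
     (1 / real t) * (\<Sum>i=1..t. loss G lam1 lam2 (d i) L) + lam1 / (2 * real t) * (norm L)\<^sup>2"

end

theory Submission
  imports Defs
begin

text \<open>The loss \<open>\<ell>(d, L)\<close> is an infimum of nonnegative functions and is at most
  \<open>\<parallel>d\<parallel>\<^sup>2/2\<close> (take \<open>r = s = 0\<close>), which bounds \<open>f\<^sub>t\<close>. For the Lipschitz estimate only pairs
  \<open>(r, s)\<close> whose hat loss is at most \<open>M\<^sup>2/2\<close> compete for the infimum; for them the residual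
  \<open>d - L r - s\<close> has norm at most \<open>M\<close> and \<open>\<parallel>r\<parallel> \<le> M/\<surd>\<lambda>\<^sub>1\<close>, so replacing \<open>L\<close> by \<open>L'\<close> moves the
  residual by \<open>(L - L') r\<close> and changes the hat loss by \<open>O(\<parallel>L - L'\<parallel>)\<close>, uniformly in \<open>d\<close>. Averaging over
  the samples preserves both estimates, and the regulariser \<open>\<lambda>\<^sub>1\<parallel>L\<parallel>\<^sup>2/(2t)\<close> is Lipschitz
  on bounded sets.\<close>

lemma norm_matrix_vector_mult_le:
  fixes A :: "real^'n::finite^'m::finite"
  shows "norm (A *v x) \<le> norm A * norm x"
proof -
  have "norm (A *v x) = L2_set (\<lambda>i. \<bar>inner (A $ i) x\<bar>) UNIV"
    by (simp add: norm_vec_def matrix_mult_dot)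
  also have "\<dots> \<le> L2_set (\<lambda>i. norm (A $ i) * norm x) UNIV"
    by (rule L2_set_mono) (auto simp: Cauchy_Schwarz_ineq2)
  also have "\<dots> = norm A * norm x"
    by (simp add: norm_vec_def L2_set_left_distrib)
  finally show ?thesis .
qed

lemma abs_power2_norm_diff_le:
  fixes a b :: "'a::real_normed_vector"
  shows "\<bar>(norm a)\<^sup>2 - (norm b)\<^sup>2\<bar> \<le> norm (a - b) * (norm a + norm b)"
proof -
  have "(norm a)\<^sup>2 - (norm b)\<^sup>2 = (norm a - norm b) * (norm a + norm b)"
    by (simp add: power2_eq_square algebra_simps)
  then show ?thesis
    using norm_triangle_ineq3[of a b] by (simp add: abs_mult mult_right_mono)
qed

lemma linf_norm_nonneg: "0 \<le> linf_norm (v :: real^'p::finite)"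
proof -
  have "\<bar>v $ i\<bar> \<le> linf_norm v" for i
    unfolding linf_norm_def by (rule Max_ge) auto
  then show ?thesis by (meson abs_ge_zero order_trans)
qed

lemma l1linf_norm_nonneg: "0 \<le> l1linf_norm G (s :: real^'p::finite)"
  unfolding l1linf_norm_def by (simp add: sum_nonneg linf_norm_nonneg)

lemma l1linf_norm_zero [simp]: "l1linf_norm G (0 :: real^'p::finite) = 0"
proof -
  have "restrict_grp 0 g = (0 :: real^'p)" for g
    by (simp add: restrict_grp_def vec_eq_iff)
  then show ?thesis by (simp add: l1linf_norm_def linf_norm_def)
qed

lemma cINF_le_cINF_add_sublevel:
  fixes f g :: "'a \<Rightarrow> real"
  assumes "bdd_below (range g)" and "(INF x. g x) \<le> H" and "0 \<le> e"
    and "\<And>x. f x \<le> H \<Longrightarrow> g x \<le> f x + e"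
  shows "(INF x. g x) \<le> (INF x. f x) + e"
proof -
  have "(INF x. g x) - e \<le> f x" for x
  proof (cases "f x \<le> H")
    case True
    then show ?thesis using assms(4) cINF_lower[OF assms(1), of x] by fastforce
  next
    case False
    then show ?thesis using assms(2,3) by linarith
  qed
  then have "(INF x. g x) - e \<le> (INF x. f x)"
    by (intro cINF_greatest) auto
  then show ?thesis by simp
qed

lemma hat_loss_nonneg:
  assumes "0 \<le> lam1" and "0 \<le> lam2"
  shows "0 \<le> hat_loss G lam1 lam2 d L r (s :: real^'p::finite)"
  unfolding hat_loss_def using assms l1linf_norm_nonneg[of G s] by simp

lemma bdd_below_hat_loss:
  assumes "0 \<le> lam1" and "0 \<le> lam2"
  shows "bdd_below (range (\<lambda>rs. hat_loss G lam1 lam2 (d :: real^'p::finite) L (fst rs) (snd rs)))"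
  using hat_loss_nonneg[OF assms] by (intro bdd_belowI[where m = 0]) auto

lemma loss_le_hat_loss:
  assumes "0 \<le> lam1" and "0 \<le> lam2"
  shows "loss G lam1 lam2 (d :: real^'p::finite) L \<le> hat_loss G lam1 lam2 d L r s"
  unfolding loss_def using cINF_lower[OF bdd_below_hat_loss[OF assms], of "(r, s)"] by simp

lemma loss_nonneg:
  assumes "0 \<le> lam1" and "0 \<le> lam2"
  shows "0 \<le> loss G lam1 lam2 (d :: real^'p::finite) L"
  unfolding loss_def using hat_loss_nonneg[OF assms] by (intro cINF_greatest) auto

lemma loss_le_half_power2:
  assumes "0 \<le> lam1" and "0 \<le> lam2" and "norm d \<le> M"
  shows "loss G lam1 lam2 (d :: real^'p::finite) L \<le> M\<^sup>2 / 2"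
proof -
  have "loss G lam1 lam2 d L \<le> (norm d)\<^sup>2 / 2"
    using loss_le_hat_loss[OF assms(1,2), of G d L 0 0] by (simp add: hat_loss_def)
  also have "\<dots> \<le> M\<^sup>2 / 2"
    using power_mono[OF assms(3) norm_ge_zero, of 2] by simp
  finally show ?thesis .
qed

lemma hat_loss_sublevel_bounds:
  assumes "0 < lam1" and "0 \<le> lam2" and "0 \<le> M"
    and "hat_loss G lam1 lam2 d L r (s :: real^'p::finite) \<le> M\<^sup>2 / 2"
  shows "norm (d - L *v r - s) \<le> M" and "norm r \<le> M / sqrt lam1"
proof -
  have "0 \<le> lam2 * l1linf_norm G s"
    using assms(2) l1linf_norm_nonneg[of G s] by simp
  then have "(norm (d - L *v r - s))\<^sup>2 + (sqrt lam1 * norm r)\<^sup>2 \<le> M\<^sup>2"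
    using assms(1,4) unfolding hat_loss_def by (simp add: power_mult_distrib)
  then have "(norm (d - L *v r - s))\<^sup>2 \<le> M\<^sup>2" and "(sqrt lam1 * norm r)\<^sup>2 \<le> M\<^sup>2"
    using zero_le_power2[of "norm (d - L *v r - s)"] zero_le_power2[of "sqrt lam1 * norm r"]
    by linarith+
  then have "norm (d - L *v r - s) \<le> M" and "sqrt lam1 * norm r \<le> M"
    using assms(3) by (auto dest: power2_le_imp_le)
  then show "norm (d - L *v r - s) \<le> M" and "norm r \<le> M / sqrt lam1"
    using assms(1) by (simp_all add: pos_le_divide_eq mult.commute)
qed

lemma hat_loss_lipschitz_on_sublevel:
  fixes L L' :: "real^'r::finite^'p::finite"
  assumes "0 < lam1" and "0 \<le> lam2" and "0 \<le> M"
    and "hat_loss G lam1 lam2 d L r s \<le> M\<^sup>2 / 2"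
    and "norm L \<le> B" and "norm L' \<le> B"
  shows "hat_loss G lam1 lam2 d L' r s
           \<le> hat_loss G lam1 lam2 d L r s + M / sqrt lam1 * (M + B * (M / sqrt lam1)) * norm (L - L')"
proof -
  define a where "a = d - L *v r - s"
  define b where "b = d - L' *v r - s"
  define \<rho> where "\<rho> = M / sqrt lam1"
  have "0 \<le> \<rho>"
    using assms(1,3) by (simp add: \<rho>_def)
  have a: "norm a \<le> M" and r: "norm r \<le> \<rho>"
    using hat_loss_sublevel_bounds[OF assms(1-4)] by (simp_all add: a_def \<rho>_def)
  have "b - a = (L - L') *v r"
    by (simp add: a_def b_def matrix_vector_mult_diff_rdistrib)
  then have "norm (b - a) \<le> norm (L - L') * norm r"
    by (simp add: norm_matrix_vector_mult_le)
  also have "\<dots> \<le> norm (L - L') * \<rho>"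
    using r by (simp add: mult_left_mono)
  finally have ba: "norm (b - a) \<le> norm (L - L') * \<rho>" .
  have "norm (L - L') \<le> 2 * B"
    using norm_triangle_ineq4[of L L'] assms(5,6) by linarith
  then have "norm (b - a) \<le> 2 * B * \<rho>"
    by (meson ba mult_right_mono order_trans \<open>0 \<le> \<rho>\<close>)
  then have "norm b + norm a \<le> 2 * M + 2 * B * \<rho>"
    using a norm_triangle_sub[of b a] by linarith
  have "(norm b)\<^sup>2 - (norm a)\<^sup>2 \<le> norm (b - a) * (norm b + norm a)"
    using abs_power2_norm_diff_le[of b a] by linarith
  also have "\<dots> \<le> (norm (L - L') * \<rho>) * (2 * M + 2 * B * \<rho>)"
    using ba \<open>norm b + norm a \<le> 2 * M + 2 * B * \<rho>\<close> \<open>0 \<le> \<rho>\<close>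
    by (intro mult_mono) auto
  finally have "(norm b)\<^sup>2 / 2 \<le> (norm a)\<^sup>2 / 2 + \<rho> * (M + B * \<rho>) * norm (L - L')"
    by (simp add: algebra_simps)
  then show ?thesis
    by (simp add: hat_loss_def a_def b_def \<rho>_def)
qed

lemma loss_lipschitz:
  fixes L L' :: "real^'r::finite^'p::finite"
  assumes "0 < lam1" and "0 \<le> lam2" and "norm d \<le> M"
    and "norm L \<le> B" and "norm L' \<le> B"
  shows "\<bar>loss G lam1 lam2 d L - loss G lam1 lam2 d L'\<bar>
           \<le> M / sqrt lam1 * (M + B * (M / sqrt lam1)) * norm (L - L')"
proof -
  define K where "K = M / sqrt lam1 * (M + B * (M / sqrt lam1))"
  have "0 \<le> M" "0 \<le> B"
    using assms(3-5) norm_ge_zero order_trans by blast+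
  have "loss G lam1 lam2 d Y \<le> loss G lam1 lam2 d X + K * norm (X - Y)"
    if "norm X \<le> B" "norm Y \<le> B" for X Y :: "real^'r^'p"
    unfolding loss_def
  proof (rule cINF_le_cINF_add_sublevel)
    show "bdd_below (range (\<lambda>rs. hat_loss G lam1 lam2 d Y (fst rs) (snd rs)))"
      using assms(1,2) by (simp add: bdd_below_hat_loss)
    show "(INF rs. hat_loss G lam1 lam2 d Y (fst rs) (snd rs)) \<le> M\<^sup>2 / 2"
      using loss_le_half_power2[of lam1 lam2 d M G Y] assms(1-3) by (simp add: loss_def)
    show "0 \<le> K * norm (X - Y)"
      using \<open>0 \<le> M\<close> \<open>0 \<le> B\<close> assms(1) by (simp add: K_def)
    show "hat_loss G lam1 lam2 d Y (fst rs) (snd rs)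
            \<le> hat_loss G lam1 lam2 d X (fst rs) (snd rs) + K * norm (X - Y)"
      if "hat_loss G lam1 lam2 d X (fst rs) (snd rs) \<le> M\<^sup>2 / 2" for rs
      using hat_loss_lipschitz_on_sublevel[OF assms(1,2) \<open>0 \<le> M\<close> that \<open>norm X \<le> B\<close> \<open>norm Y \<le> B\<close>]
      by (simp add: K_def)
  qed
  from this[of L L'] this[of L' L] show ?thesis
    using assms(4,5) by (simp add: K_def norm_minus_commute abs_le_iff)
qed

lemma abs_mean_le:
  fixes x :: "nat \<Rightarrow> real"
  assumes "\<And>i. \<bar>x i\<bar> \<le> C"
  shows "\<bar>(1 / real t) * (\<Sum>i=1..t. x i)\<bar> \<le> C"
proof (cases "t = 0")
  case True
  then show ?thesis using assms[of 0] by simp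
next
  case False
  have "\<bar>\<Sum>i=1..t. x i\<bar> \<le> (\<Sum>i=1..t. \<bar>x i\<bar>)"
    by (rule sum_abs)
  also have "\<dots> \<le> real t * C"
    using sum_mono[of "{1..t}" "\<lambda>i. \<bar>x i\<bar>" "\<lambda>_. C"] assms by simp
  finally have "\<bar>\<Sum>i=1..t. x i\<bar> \<le> real t * C" .
  then show ?thesis
    using False by (simp add: abs_mult divide_le_eq mult.commute)
qed

lemma abs_emp_cost_le:
  fixes L :: "real^'r::finite^'p::finite"
  assumes "0 < lam1" and "0 \<le> lam2" and "\<And>i. norm (d i) \<le> M"
    and "norm L \<le> B" and "1 \<le> t"
  shows "\<bar>emp_cost G lam1 lam2 d t L\<bar> \<le> M\<^sup>2 / 2 + lam1 / 2 * B\<^sup>2"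
proof -
  have "\<bar>loss G lam1 lam2 (d i) L\<bar> \<le> M\<^sup>2 / 2" for i
    using loss_nonneg[of lam1 lam2 G "d i" L] loss_le_half_power2[of lam1 lam2 "d i" M G L]
      assms(1-3)
    by simp
  then have mean: "\<bar>(1 / real t) * (\<Sum>i=1..t. loss G lam1 lam2 (d i) L)\<bar> \<le> M\<^sup>2 / 2"
    by (rule abs_mean_le)
  moreover have "lam1 / (2 * real t) \<le> lam1 / 2"
    using assms(1,5) by (intro divide_left_mono) auto
  moreover have "(norm L)\<^sup>2 \<le> B\<^sup>2"
    using power_mono[OF assms(4) norm_ge_zero, of 2] .
  ultimately have "lam1 / (2 * real t) * (norm L)\<^sup>2 \<le> lam1 / 2 * B\<^sup>2"
    using assms(1) by (intro mult_mono) auto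
  then have "\<bar>lam1 / (2 * real t) * (norm L)\<^sup>2\<bar> \<le> lam1 / 2 * B\<^sup>2"
    using assms(1) by simp
  then show ?thesis
    unfolding emp_cost_def
    using mean abs_triangle_ineq[of "(1 / real t) * (\<Sum>i=1..t. loss G lam1 lam2 (d i) L)"
        "lam1 / (2 * real t) * (norm L)\<^sup>2"]
    by linarith
qed

lemma emp_cost_lipschitz:
  fixes L L' :: "real^'r::finite^'p::finite"
  assumes "0 < lam1" and "0 \<le> lam2" and "\<And>i. norm (d i) \<le> M"
    and "norm L \<le> B" and "norm L' \<le> B" and "1 \<le> t"
  shows "\<bar>emp_cost G lam1 lam2 d t L - emp_cost G lam1 lam2 d t L'\<bar>
           \<le> (M / sqrt lam1 * (M + B * (M / sqrt lam1)) + lam1 * B) * norm (L - L')"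
proof -
  define K where "K = M / sqrt lam1 * (M + B * (M / sqrt lam1))"
  have "emp_cost G lam1 lam2 d t L - emp_cost G lam1 lam2 d t L'
        = (1 / real t) * (\<Sum>i=1..t. loss G lam1 lam2 (d i) L - loss G lam1 lam2 (d i) L')
          + lam1 / (2 * real t) * ((norm L)\<^sup>2 - (norm L')\<^sup>2)" (is "_ = ?mean + ?reg")
    by (simp add: emp_cost_def sum_subtractf algebra_simps)
  moreover have "\<bar>?mean\<bar> \<le> K * norm (L - L')"
    using loss_lipschitz[OF assms(1,2,3,4,5)] unfolding K_def by (rule abs_mean_le)
  moreover have "\<bar>?reg\<bar> \<le> lam1 * B * norm (L - L')"
  proof -
    have "\<bar>?reg\<bar> = lam1 / (2 * real t) * \<bar>(norm L)\<^sup>2 - (norm L')\<^sup>2\<bar>"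
      using assms(1) by (simp add: abs_mult)
    also have "\<dots> \<le> lam1 / 2 * \<bar>(norm L)\<^sup>2 - (norm L')\<^sup>2\<bar>"
      using assms(1,6) by (intro mult_right_mono divide_left_mono) auto
    also have "\<dots> \<le> lam1 / 2 * (norm (L - L') * (norm L + norm L'))"
      using assms(1) abs_power2_norm_diff_le[of L L'] by (simp add: mult_left_mono)
    also have "\<dots> \<le> lam1 / 2 * (norm (L - L') * (2 * B))"
      using assms(1,4,5) by (simp add: mult_left_mono)
    finally show ?thesis by (simp add: mult_ac)
  qed
  ultimately show ?thesis
    using abs_triangle_ineq[of ?mean ?reg] unfolding K_def distrib_right by linarith
qed

theorem proposition4:
  fixes G :: "'p::finite set set" and lam1 lam2 M :: real
    and d :: "nat \<Rightarrow> real^'p" and \<L> :: "(real^'r::finite^'p) set"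
  assumes "lam1 > 0" and "lam2 > 0"
    and "\<And>t. norm (d t) \<le> M"
    and "compact \<L>"
  shows "\<exists>C K. \<forall>t\<ge>1. \<forall>L\<in>\<L>. \<forall>L'\<in>\<L>.
           \<bar>emp_cost G lam1 lam2 d t L\<bar> \<le> C \<and>
           \<bar>emp_cost G lam1 lam2 d t L - emp_cost G lam1 lam2 d t L'\<bar> \<le> K * norm (L - L')"
proof -
  obtain B where B: "\<And>L. L \<in> \<L> \<Longrightarrow> norm L \<le> B"
    using compact_imp_bounded[OF assms(4)] by (auto simp: bounded_iff)
  note lam = assms(1) less_imp_le[OF assms(2)]
  show ?thesis
    using abs_emp_cost_le[OF lam assms(3) B] emp_cost_lipschitz[OF lam assms(3) B B]
    by (intro exI allI impI ballI conjI)
qed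

end
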